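(* Let $\mathcal{G}=(\mathcal{V},\mathcal{E})$ be a strongly connected digraph and let $\{\mathbf{A}(k)\}_{k\in\mathbb{Z}_+}$ be the sequence of weight matrices generated by the distributed quantized weight-balancing algorithm described in the context, with the step-size $\gamma(k)=2^{-n}$ for $2^n-1\le k\le 2^{n+1}-2$, $n\in\mathbb{Z}_+$. Then: (a) (Asymptotic convergence) $\lim_{k\to\infty}\mathbf{A}(k)=\mathbf{A}^\infty$ for some matrix $\mathbf{A}^\infty$ that makes the digraph weight-balanced, i.e. with $\mathbf{A}^\infty$ every node $i$ satisfies $\sum_{j\in\mathcal{N}_i^-}a^\infty_{ij}=\sum_{j\in\mathcal{N}_i^+}a^\infty_{ji}$; (b) (Convergence rate) $\Vert\boldsymbol{\epsilon}(k)\Vert_1=O(1/k)$ as $k\to\infty$.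
   Context: $\mathcal{G}=(\mathcal{V},\mathcal{E})$ is a directed graph with $\mathcal{V}=\{1,\dots,N\}$, no self-loops; $(i,j)\in\mathcal{E}$ denotes an edge from $i$ to $j$. In-neighbors $\mathcal{N}_i^-=\{j:(j,i)\in\mathcal{E}\}$, out-neighbors $\mathcal{N}_i^+=\{j:(i,j)\in\mathcal{E}\}$, out-degree $d_i^+=|\mathcal{N}_i^+|$. Strongly connected means there is a directed path from every node to every other node. A weight matrix $\mathbf{A}=(a_{ij})$ is compliant with $\mathcal{G}$: $a_{ij}\ge 0$ if $(j,i)\in\mathcal{E}$ and $a_{ij}=0$ otherwise. Algorithm: initialize $a_{ij}(0)=1$ if $j\in\mathcal{N}_i^-$ and $a_{ij}(0)=0$ otherwise. At iteration $k$, define the balance $b_i(k)=\sum_{j\in\mathcal{N}_i^-}a_{ij}(k)-\sum_{j\in\mathcal{N}_i^+}a_{ji}(k)$; each node $i$ computes the bit $n_i(k)=1$ if $b_i(k)\ge d_i^+\gamma(k)$ and $n_i(k)=0$ otherwise, and broadcasts it to its out-neighbors; then each node $i$ updates $a_{ij}(k+1)=a_{ij}(k)+n_j(k)\gamma(k)$ for all $j\in\mathcal{N}_i^-$ (other entries stay $0$). The imbalance vector is $\boldsymbol{\epsilon}(k)=(|b_i(k)|)_{i=1}^N$. *)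

theory Defs
  imports "HOL-Analysis.Analysis" "HOL-Library.Landau_Symbols"
begin

text \<open>Vertices are the elements of a finite type 'v; the edge set is E, with (i,j) \<in> E
  meaning an edge from i to j.  A weight matrix is a function M :: 'v \<Rightarrow> 'v \<Rightarrow> real,
  M i j = a_ij.\<close>

definition in_nbrs :: "('v \<times> 'v) set \<Rightarrow> 'v \<Rightarrow> 'v set" where
  "in_nbrs E i = {j. (j, i) \<in> E}"

definition out_nbrs :: "('v \<times> 'v) set \<Rightarrow> 'v \<Rightarrow> 'v set" where
  "out_nbrs E i = {j. (i, j) \<in> E}"

definition out_deg :: "('v \<times> 'v) set \<Rightarrow> 'v \<Rightarrow> nat" where
  "out_deg E i = card (out_nbrs E i)"

definition strongly_connected :: "('v \<times> 'v) set \<Rightarrow> bool" where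
  "strongly_connected E \<longleftrightarrow> (\<forall>i j. i \<noteq> j \<longrightarrow> (i, j) \<in> E\<^sup>+)"

definition no_self_loops :: "('v \<times> 'v) set \<Rightarrow> bool" where
  "no_self_loops E \<longleftrightarrow> (\<forall>i. (i, i) \<notin> E)"

definition balance :: "('v \<times> 'v) set \<Rightarrow> ('v \<Rightarrow> 'v \<Rightarrow> real) \<Rightarrow> 'v \<Rightarrow> real" where
  "balance E M i = (\<Sum>j\<in>in_nbrs E i. M i j) - (\<Sum>j\<in>out_nbrs E i. M j i)"

definition weight_balanced :: "('v \<times> 'v) set \<Rightarrow> ('v \<Rightarrow> 'v \<Rightarrow> real) \<Rightarrow> bool" where
  "weight_balanced E M \<longleftrightarrow> (\<forall>i. (\<Sum>j\<in>in_nbrs E i. M i j) = (\<Sum>j\<in>out_nbrs E i. M j i))"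

definition step_size :: "nat \<Rightarrow> real" where
  "step_size k = 1 / 2 ^ (THE n::nat. 2 ^ n - 1 \<le> k \<and> k \<le> 2 ^ (n + 1) - 2)"

definition bit :: "('v \<times> 'v) set \<Rightarrow> ('v \<Rightarrow> 'v \<Rightarrow> real) \<Rightarrow> real \<Rightarrow> 'v \<Rightarrow> real" where
  "bit E M g i = (if balance E M i \<ge> real (out_deg E i) * g then 1 else 0)"

primrec alg :: "('v \<times> 'v) set \<Rightarrow> nat \<Rightarrow> 'v \<Rightarrow> 'v \<Rightarrow> real" where
  "alg E 0 = (\<lambda>i j. if j \<in> in_nbrs E i then 1 else 0)"
| "alg E (Suc k) = (\<lambda>i j. if j \<in> in_nbrs E i
        then alg E k i j + bit E (alg E k) (step_size k) j * step_size k
        else 0)"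

definition imbalance_norm1 :: "('v::finite \<times> 'v) set \<Rightarrow> nat \<Rightarrow> real" where
  "imbalance_norm1 E k = (\<Sum>i\<in>UNIV. \<bar>balance E (alg E k) i\<bar>)"

end

(*
  Every entry a_ij(k) with j in N_i^- equals the weight x_j(k) that node j currently puts on each
  of its out-edges, so the algorithm is a monotone iteration on node weights x, with balance
  b_i = sum_{j in N_i^-} x_j - d_i x_i.  Strong connectivity yields a positive v with zero balance
  (a fixed point of a column-stochastic matrix, by Brouwer's theorem).  Then max_i x_i/v_i is
  nonincreasing and min_i x_i/v_i nondecreasing, so x increases, stays bounded and converges.
  If no node fires at step size g, following a path from a node of maximal ratio to one of minimal
  ratio shows that the spread of the ratios is at most C g, with C depending only on the graph.
  Phase n of the schedule uses step 2^-n for 2^n steps: either a state in which no node fires is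
  reached, and it persists to the end of the phase, or every step fires and the total weight grows
  by 1.  As the total weight is bounded, the first case occurs infinitely often; once 2^n exceeds
  C times the total of v it recurs in every later phase, because the total weight can then grow by
  less than 1.  Hence the spread, which bounds the imbalance, is O(2^-n) = O(1/k).
*)

theory Submission
  imports Defs
begin

primrec out_weight :: "('v \<times> 'v) set \<Rightarrow> nat \<Rightarrow> 'v \<Rightarrow> real" where
  "out_weight E 0 = (\<lambda>j. 1)"
| "out_weight E (Suc k) = (\<lambda>j. out_weight E k j + bit E (alg E k) (step_size k) j * step_size k)"

lemma alg_eq_out_weight: "alg E k i j = (if j \<in> in_nbrs E i then out_weight E k j else 0)"
  by (induction k) auto

definition node_balance :: "('v \<times> 'v) set \<Rightarrow> ('v \<Rightarrow> real) \<Rightarrow> 'v \<Rightarrow> real" where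
  "node_balance E z i = (\<Sum>j\<in>in_nbrs E i. z j) - real (out_deg E i) * z i"

lemma balance_eq_node_balance:
  assumes "\<And>i j. M i j = (if j \<in> in_nbrs E i then z j else 0)"
  shows "balance E M i = node_balance E z i"
proof -
  have "(\<Sum>j\<in>in_nbrs E i. M i j) = (\<Sum>j\<in>in_nbrs E i. z j)"
    by (rule sum.cong) (auto simp: assms)
  moreover have "(\<Sum>j\<in>out_nbrs E i. M j i) = (\<Sum>j\<in>out_nbrs E i. z i)"
    by (rule sum.cong) (auto simp: assms in_nbrs_def out_nbrs_def)
  ultimately show ?thesis
    by (simp add: balance_def node_balance_def out_deg_def)
qed

lemma weight_balanced_iff_balance: "weight_balanced E M \<longleftrightarrow> (\<forall>i. balance E M i = 0)"
  by (simp add: weight_balanced_def balance_def)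

lemma balance_alg: "balance E (alg E k) i = node_balance E (out_weight E k) i"
  by (rule balance_eq_node_balance) (rule alg_eq_out_weight)

definition quiescent :: "('v \<times> 'v) set \<Rightarrow> ('v \<Rightarrow> real) \<Rightarrow> real \<Rightarrow> bool" where
  "quiescent E z g \<longleftrightarrow> (\<forall>i. node_balance E z i < real (out_deg E i) * g)"

lemma out_weight_Suc:
  "out_weight E (Suc k) j = out_weight E k j +
     (if real (out_deg E j) * step_size k \<le> node_balance E (out_weight E k) j then step_size k else 0)"
  by (simp add: bit_def balance_alg)

declare out_weight.simps(2) [simp del]

lemma out_weight_Suc_quiescent:
  "quiescent E (out_weight E k) (step_size k) \<Longrightarrow> out_weight E (Suc k) = out_weight E k"
  by (auto simp: quiescent_def out_weight_Suc not_le[symmetric])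

lemma step_size_pos: "0 < step_size k"
  by (simp add: step_size_def)

definition phase_start :: "nat \<Rightarrow> nat" where
  "phase_start n = 2 ^ n - 1"

lemma phase_start_Suc: "phase_start (Suc n) = phase_start n + 2 ^ n"
  by (simp add: phase_start_def)

lemma phase_start_mono: "m \<le> n \<Longrightarrow> phase_start m \<le> phase_start n"
  by (simp add: phase_start_def diff_le_mono)

lemma in_phase_iff:
  "phase_start n \<le> k \<and> k < phase_start (Suc n) \<longleftrightarrow> 2 ^ n \<le> k + 1 \<and> k + 1 < 2 ^ Suc n"
proof -
  have "1 \<le> (2::nat) ^ n" by simp
  then show ?thesis by (auto simp: phase_start_def)
qed

lemma step_size_phase:
  assumes "phase_start n \<le> k" "k < phase_start (Suc n)"
  shows "step_size k = 1 / 2 ^ n"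
proof -
  have defining_interval:
    "2 ^ m - 1 \<le> k \<and> k \<le> 2 ^ (m + 1) - 2 \<longleftrightarrow> 2 ^ m \<le> k + 1 \<and> k + 1 < 2 ^ Suc m" for m :: nat
  proof -
    have "1 \<le> (2::nat) ^ m" by simp
    then show ?thesis by (simp only: power_Suc Suc_eq_plus1[symmetric]) linarith
  qed
  have k: "2 ^ n \<le> k + 1" "k + 1 < 2 ^ Suc n"
    using in_phase_iff[of n k] assms by blast+
  have "(THE m. 2 ^ m - 1 \<le> k \<and> k \<le> 2 ^ (m + 1) - 2) = n"
  proof (rule the_equality)
    show "2 ^ n - 1 \<le> k \<and> k \<le> 2 ^ (n + 1) - 2"
      unfolding defining_interval using k by blast
  next
    fix m assume "2 ^ m - 1 \<le> k \<and> k \<le> 2 ^ (m + 1) - 2"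
    then have m: "2 ^ m \<le> k + 1" "k + 1 < 2 ^ Suc m"
      unfolding defining_interval by blast+
    have "m < Suc n" "n < Suc m"
      by (rule power_less_imp_less_exp[of "2::nat"], simp, use m k in linarith)+
    then show "m = n"
      by simp
  qed
  then show ?thesis
    by (simp add: step_size_def)
qed

lemma phase_containing: obtains n where "phase_start n \<le> k" "k < phase_start (Suc n)"
  using ex_power_ivl1[of 2 "k + 1"] in_phase_iff by auto

lemma strongly_connected_out_deg_pos:
  fixes E :: "('v::finite \<times> 'v) set"
  assumes "strongly_connected E" "j \<noteq> i"
  shows "0 < out_deg E i"
proof -
  have "(i, j) \<in> E\<^sup>+"
    using assms by (auto simp: strongly_connected_def)
  then obtain z where "(i, z) \<in> E"
    by (auto elim: converse_tranclE)
  then show ?thesis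
    by (auto simp: out_deg_def out_nbrs_def card_gt_0_iff)
qed

lemma column_stochastic_fixpoint:
  fixes C :: "'n::finite \<Rightarrow> 'n \<Rightarrow> real"
  assumes nonneg: "\<And>i j. 0 \<le> C i j" and column_sum: "\<And>j. (\<Sum>i\<in>UNIV. C i j) = 1"
  shows "\<exists>y. (\<forall>i. 0 \<le> y i) \<and> (\<Sum>i\<in>UNIV. y i) = 1 \<and> (\<forall>i. (\<Sum>j\<in>UNIV. C i j * y j) = y i)"
proof -
  define S :: "(real^'n) set"
    where "S = {y. \<forall>i. 0 \<le> y $ i} \<inter> {y. inner (\<chi> i. 1) y = 1}"
  have mem_S: "y \<in> S \<longleftrightarrow> (\<forall>i. 0 \<le> y $ i) \<and> (\<Sum>i\<in>UNIV. y $ i) = 1" for y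
    by (simp add: S_def inner_vec_def)
  define F :: "real^'n \<Rightarrow> real^'n"
    where "F y = (\<chi> i. \<Sum>j\<in>UNIV. C i j * y $ j)" for y
  have "bounded S"
    unfolding bounded_iff
  proof (intro exI ballI)
    fix y assume "y \<in> S"
    then show "norm y \<le> 1"
      using norm_le_l1_cart[of y] by (simp add: mem_S)
  qed
  moreover have "closed S"
    unfolding S_def by (intro closed_Int closed_positive_orthant closed_hyperplane)
  ultimately have "compact S"
    by (simp add: compact_eq_bounded_closed)
  moreover have "convex S"
    unfolding S_def
    by (intro convex_Int convex_box_cart convex_hyperplane) (simp add: atLeast_def[symmetric])
  moreover have "(\<chi> i. 1 / real CARD('n)) \<in> S"
    by (simp add: mem_S)
  moreover have "continuous_on S F"
    unfolding F_def by (intro continuous_intros)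
  moreover have "F \<in> S \<rightarrow> S"
  proof
    fix y assume y: "y \<in> S"
    have "(\<Sum>i\<in>UNIV. F y $ i) = (\<Sum>i\<in>UNIV. \<Sum>j\<in>UNIV. C i j * y $ j)"
      by (simp add: F_def)
    also have "\<dots> = (\<Sum>j\<in>UNIV. (\<Sum>i\<in>UNIV. C i j) * y $ j)"
      by (subst sum.swap) (simp add: sum_distrib_right)
    also have "\<dots> = 1"
      using y by (simp add: column_sum mem_S)
    moreover have "0 \<le> F y $ i" for i
      using y nonneg by (simp add: F_def mem_S sum_nonneg)
    ultimately show "F y \<in> S"
      by (simp add: mem_S)
  qed
  ultimately obtain y where "y \<in> S" "F y = y"
    using brouwer[of S F] by blast
  then have "(\<Sum>j\<in>UNIV. C i j * y $ j) = y $ i" for i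
    by (metis F_def vec_lambda_beta)
  with \<open>y \<in> S\<close> show ?thesis
    by (intro exI[of _ "\<lambda>i. y $ i"]) (simp add: mem_S)
qed

lemma balancing_node_weights_exist:
  fixes E :: "('v::finite \<times> 'v) set"
  assumes sc: "strongly_connected E" and deg_pos: "\<And>i. 0 < out_deg E i"
  shows "\<exists>v. (\<forall>i. 0 < v i) \<and> (\<forall>i. node_balance E v i = 0)"
proof -
  \<comment> \<open>A stationary distribution y of the random walk that moves from j to a uniformly chosen
    out-neighbour gives the balancing weights y j / out_deg E j.\<close>
  define C where "C i j = (if (j, i) \<in> E then 1 / real (out_deg E j) else 0)" for i j
  have "(\<Sum>i\<in>UNIV. C i j) = 1" for j
    using deg_pos[of j] by (auto simp: C_def sum.If_cases out_deg_def out_nbrs_def card_gt_0_iff)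
  moreover have "0 \<le> C i j" for i j
    by (simp add: C_def)
  ultimately obtain y where y_nonneg: "\<And>i. 0 \<le> y i" and y_sum: "(\<Sum>i\<in>UNIV. y i) = 1"
    and y_fix: "\<And>i. (\<Sum>j\<in>UNIV. C i j * y j) = y i"
    using column_stochastic_fixpoint[of C] by blast
  have C_row: "(\<Sum>j\<in>UNIV. C i j * y j) = (\<Sum>j\<in>in_nbrs E i. y j / real (out_deg E j))" for i
  proof -
    have "(\<Sum>j\<in>UNIV. C i j * y j) = (\<Sum>j\<in>UNIV. if (j, i) \<in> E then y j / real (out_deg E j) else 0)"
      by (rule sum.cong) (auto simp: C_def)
    then show ?thesis
      by (simp add: sum.If_cases in_nbrs_def)
  qed
  have y_edge: "0 < y q" if "(p, q) \<in> E" "0 < y p" for p q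
  proof -
    have "0 < C q p * y p"
      using that deg_pos[of p] by (simp add: C_def)
    also have "\<dots> \<le> (\<Sum>j\<in>UNIV. C q j * y j)"
      by (rule member_le_sum) (auto simp: C_def y_nonneg)
    finally show ?thesis
      by (simp add: y_fix)
  qed
  have "\<exists>a. 0 < y a"
  proof (rule ccontr)
    assume "\<nexists>a. 0 < y a"
    then have "(\<Sum>i\<in>UNIV. y i) \<le> 0"
      by (simp add: not_less sum_nonpos)
    then show False
      using y_sum by simp
  qed
  then obtain a where "0 < y a"
    by blast
  have y_pos: "0 < y i" for i
  proof (cases "i = a")
    case False
    then have "(a, i) \<in> E\<^sup>+"
      using sc by (simp add: strongly_connected_def)
    then show ?thesis
      by (induction rule: trancl_induct) (auto intro: y_edge \<open>0 < y a\<close>)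
  qed (use \<open>0 < y a\<close> in simp)
  show ?thesis
  proof (intro exI conjI allI)
    fix i
    show "0 < y i / real (out_deg E i)"
      using y_pos deg_pos by simp
    show "node_balance E (\<lambda>i. y i / real (out_deg E i)) i = 0"
      using C_row[of i] y_fix[of i] deg_pos[of i] by (simp add: node_balance_def)
  qed
qed

locale balancing_dynamics =
  fixes E :: "('v::finite \<times> 'v) set" and v :: "'v \<Rightarrow> real"
  assumes strongly_connected: "strongly_connected E"
    and out_deg_pos: "0 < out_deg E i"
    and v_pos: "0 < v i"
    and v_balanced: "node_balance E v i = 0"
begin

abbreviation deg :: "'v \<Rightarrow> real" where
  "deg i \<equiv> real (out_deg E i)"

abbreviation w :: "nat \<Rightarrow> 'v \<Rightarrow> real" where
  "w \<equiv> out_weight E"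

lemma in_sum_v: "(\<Sum>j\<in>in_nbrs E i. v j) = deg i * v i"
  using v_balanced[of i] by (simp add: node_balance_def)

definition ratio_max :: "('v \<Rightarrow> real) \<Rightarrow> real" where
  "ratio_max z = Max (range (\<lambda>i. z i / v i))"

definition ratio_min :: "('v \<Rightarrow> real) \<Rightarrow> real" where
  "ratio_min z = Min (range (\<lambda>i. z i / v i))"

definition spread :: "('v \<Rightarrow> real) \<Rightarrow> real" where
  "spread z = ratio_max z - ratio_min z"

lemma le_ratio_max: "z i \<le> ratio_max z * v i"
proof -
  have "z i / v i \<le> ratio_max z"
    unfolding ratio_max_def by (rule Max_ge) auto
  then show ?thesis
    using v_pos[of i] by (simp add: pos_divide_le_eq)
qed

lemma ratio_min_le: "ratio_min z * v i \<le> z i"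
proof -
  have "ratio_min z \<le> z i / v i"
    unfolding ratio_min_def by (rule Min_le) auto
  then show ?thesis
    using v_pos[of i] by (simp add: pos_le_divide_eq)
qed

lemma ratio_max_le: "(\<And>i. z i \<le> c * v i) \<Longrightarrow> ratio_max z \<le> c"
  unfolding ratio_max_def using v_pos by (auto simp: pos_divide_le_eq)

lemma le_ratio_min: "(\<And>i. c * v i \<le> z i) \<Longrightarrow> c \<le> ratio_min z"
  unfolding ratio_min_def using v_pos by (auto simp: pos_le_divide_eq)

lemma ratio_max_attained: obtains i where "z i = ratio_max z * v i"
proof -
  have "ratio_max z \<in> range (\<lambda>i. z i / v i)"
    unfolding ratio_max_def by (rule Max_in) auto
  then obtain i where "ratio_max z = z i / v i"
    by auto
  then show ?thesis
    using v_pos[of i] by (intro that[of i]) simp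
qed

lemma ratio_min_attained: obtains i where "z i = ratio_min z * v i"
proof -
  have "ratio_min z \<in> range (\<lambda>i. z i / v i)"
    unfolding ratio_min_def by (rule Min_in) auto
  then obtain i where "ratio_min z = z i / v i"
    by auto
  then show ?thesis
    using v_pos[of i] by (intro that[of i]) simp
qed

lemma in_sum_le_ratio_max: "(\<Sum>j\<in>in_nbrs E i. z j) \<le> ratio_max z * (deg i * v i)"
proof -
  have "(\<Sum>j\<in>in_nbrs E i. z j) \<le> (\<Sum>j\<in>in_nbrs E i. ratio_max z * v j)"
    by (rule sum_mono) (rule le_ratio_max)
  then show ?thesis
    by (simp add: sum_distrib_left[symmetric] in_sum_v)
qed

lemma ratio_min_le_in_sum: "ratio_min z * (deg i * v i) \<le> (\<Sum>j\<in>in_nbrs E i. z j)"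
proof -
  have "(\<Sum>j\<in>in_nbrs E i. ratio_min z * v j) \<le> (\<Sum>j\<in>in_nbrs E i. z j)"
    by (rule sum_mono) (rule ratio_min_le)
  then show ?thesis
    by (simp add: sum_distrib_left[symmetric] in_sum_v)
qed

lemma abs_node_balance_le: "\<bar>node_balance E z i\<bar> \<le> deg i * v i * spread z"
proof -
  have "deg i * z i \<le> deg i * (ratio_max z * v i)" "deg i * (ratio_min z * v i) \<le> deg i * z i"
    by (simp_all add: mult_left_mono le_ratio_max ratio_min_le)
  then show ?thesis
    using in_sum_le_ratio_max[of z i] ratio_min_le_in_sum[of z i]
    by (simp add: node_balance_def spread_def abs_le_iff algebra_simps)
qed

definition edge_gain :: real where
  "edge_gain = 1 + Max (range (\<lambda>(y, l). deg y * (1 + v y) / v l))"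

lemma le_edge_gain: "1 + deg y * (1 + v y) / v l \<le> edge_gain"
proof -
  have "deg y * (1 + v y) / v l \<le> Max (range (\<lambda>(y, l). deg y * (1 + v y) / v l))"
    by (rule Max_ge) auto
  then show ?thesis
    by (simp add: edge_gain_def)
qed

lemma one_le_edge_gain: "1 \<le> edge_gain"
proof -
  have "0 \<le> deg i * (1 + v i) / v i" for i
    using v_pos[of i] by (simp add: less_imp_le)
  from this[of undefined] show ?thesis
    using le_edge_gain[of undefined undefined] by linarith
qed

lemma quiescent_edge:
  assumes quiet: "quiescent E z g" and "0 \<le> g" and edge: "(l, y) \<in> E"
  shows "g + (z l / v l - ratio_min z) \<le> edge_gain * (g + (z y / v y - ratio_min z))"
proof -
  define e where "e j = z j / v j - ratio_min z" for j
  have z_eq: "z j = v j * ratio_min z + v j * e j" for j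
    using v_pos[of j] by (simp add: e_def algebra_simps)
  have e_nonneg: "0 \<le> e j" for j
    using ratio_min_le[of z j] v_pos[of j] by (simp add: e_def pos_le_divide_eq)
  have "(\<Sum>j\<in>in_nbrs E y. z j) = ratio_min z * (deg y * v y) + (\<Sum>j\<in>in_nbrs E y. v j * e j)"
    by (simp add: z_eq sum.distrib sum_distrib_right[symmetric] in_sum_v mult.commute)
  moreover have "v l * e l \<le> (\<Sum>j\<in>in_nbrs E y. v j * e j)"
    using edge v_pos e_nonneg
    by (intro member_le_sum) (auto simp: in_nbrs_def less_imp_le)
  moreover have "node_balance E z y < deg y * g"
    using quiet by (simp add: quiescent_def)
  ultimately have "v l * e l < deg y * g + deg y * v y * e y"
    by (simp add: node_balance_def z_eq[of y] algebra_simps)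
  also have "\<dots> \<le> deg y * (1 + v y) * (g + e y)"
    using \<open>0 \<le> g\<close> e_nonneg[of y] v_pos[of y] by (simp add: algebra_simps)
  finally have "e l \<le> deg y * (1 + v y) / v l * (g + e y)"
    using v_pos[of l] by (simp add: pos_less_divide_eq mult.commute less_imp_le)
  also have "\<dots> \<le> (edge_gain - 1) * (g + e y)"
    using le_edge_gain[of y l] \<open>0 \<le> g\<close> e_nonneg[of y] by (intro mult_right_mono) auto
  finally show ?thesis
    using one_le_edge_gain e_nonneg[of y] by (simp add: e_def[symmetric] algebra_simps)
qed

lemma quiescent_path:
  assumes quiet: "quiescent E z g" and "0 \<le> g" and min: "z m = ratio_min z * v m"
  shows "(l, m) \<in> E ^^ n \<Longrightarrow> g + (z l / v l - ratio_min z) \<le> edge_gain ^ n * g"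
proof (induction n arbitrary: l)
  case 0
  then show ?case
    using min v_pos[of m] by simp
next
  case (Suc n)
  then obtain y where "(l, y) \<in> E" "(y, m) \<in> E ^^ n"
    by (meson relpow_Suc_E2)
  then have "g + (z l / v l - ratio_min z) \<le> edge_gain * (g + (z y / v y - ratio_min z))"
    using quiescent_edge[OF quiet \<open>0 \<le> g\<close>] by blast
  also have "\<dots> \<le> edge_gain * (edge_gain ^ n * g)"
    using Suc.IH \<open>(y, m) \<in> E ^^ n\<close> one_le_edge_gain by (intro mult_left_mono) auto
  finally show ?case
    by simp
qed

definition spread_factor :: real where
  "spread_factor = edge_gain ^ card E"

lemma quiescent_spread:
  assumes "quiescent E z g" and "0 \<le> g"
  shows "spread z \<le> spread_factor * g"
proof -
  obtain m where m: "z m = ratio_min z * v m"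
    by (rule ratio_min_attained)
  obtain l where l: "z l = ratio_max z * v l"
    by (rule ratio_max_attained)
  have "(l, m) \<in> E\<^sup>*"
    using strongly_connected
    by (cases "l = m") (auto simp: strongly_connected_def intro: trancl_into_rtrancl)
  then obtain n where path: "(l, m) \<in> E ^^ n" and "n \<le> card E"
    using rtrancl_finite_eq_relpow[of E] by auto
  have "spread z \<le> g + (z l / v l - ratio_min z)"
    using l v_pos[of l] \<open>0 \<le> g\<close> by (simp add: spread_def)
  also have "\<dots> \<le> edge_gain ^ n * g"
    using quiescent_path[OF assms m path] .
  also have "\<dots> \<le> spread_factor * g"
    unfolding spread_factor_def using one_le_edge_gain \<open>n \<le> card E\<close> \<open>0 \<le> g\<close>
    by (intro mult_right_mono power_increasing) auto
  finally show ?thesis .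
qed

lemma out_weight_le_Suc: "w k i \<le> w (Suc k) i"
  using step_size_pos[of k] by (simp add: out_weight_Suc)

lemma out_weight_mono: "k \<le> k' \<Longrightarrow> w k i \<le> w k' i"
  by (rule lift_Suc_mono_le[of "\<lambda>k. w k i"]) (rule out_weight_le_Suc)

lemma out_weight_Suc_le_ratio_max: "w (Suc k) i \<le> ratio_max (w k) * v i"
proof (cases "deg i * step_size k \<le> node_balance E (w k) i")
  case True
  then have "deg i * (w k i + step_size k) \<le> deg i * (ratio_max (w k) * v i)"
    using in_sum_le_ratio_max[of "w k" i] by (simp add: node_balance_def algebra_simps)
  then have "w k i + step_size k \<le> ratio_max (w k) * v i"
    using out_deg_pos[of i] by simp
  then show ?thesis
    using True by (simp add: out_weight_Suc)
next
  case False
  then show ?thesis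
    using le_ratio_max[of "w k" i] by (simp add: out_weight_Suc)
qed

lemma ratio_max_antimono: "k \<le> k' \<Longrightarrow> ratio_max (w k') \<le> ratio_max (w k)"
  by (rule lift_Suc_antimono_le[of "\<lambda>k. ratio_max (w k)"])
    (intro ratio_max_le out_weight_Suc_le_ratio_max)

lemma ratio_min_mono: "k \<le> k' \<Longrightarrow> ratio_min (w k) \<le> ratio_min (w k')"
  by (rule lift_Suc_mono_le[of "\<lambda>k. ratio_min (w k)"])
    (intro le_ratio_min order.trans[OF ratio_min_le out_weight_le_Suc])

lemma spread_antimono: "k \<le> k' \<Longrightarrow> spread (w k') \<le> spread (w k)"
  using ratio_max_antimono ratio_min_mono by (simp add: spread_def diff_mono)

lemma out_weight_le_ratio_max: "k \<le> k' \<Longrightarrow> w k' i \<le> ratio_max (w k) * v i"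
  using le_ratio_max[of "w k'" i] ratio_max_antimono[of k k'] v_pos[of i]
  by (meson mult_right_mono less_imp_le order_trans)

lemma out_weight_increment_le: "k \<le> k' \<Longrightarrow> w k' i - w k i \<le> spread (w k) * v i"
  using out_weight_le_ratio_max[of k k' i] ratio_min_le[of "w k" i]
  by (simp add: spread_def left_diff_distrib)

definition total_weight :: "nat \<Rightarrow> real" where
  "total_weight k = (\<Sum>i\<in>UNIV. w k i)"

lemma total_weight_nonneg: "0 \<le> total_weight k"
  using out_weight_mono[of 0 k]
  by (auto simp: total_weight_def intro: sum_nonneg order.trans[OF zero_le_one])

lemma total_weight_bounded: "total_weight k \<le> ratio_max (w 0) * (\<Sum>i\<in>UNIV. v i)"
  unfolding total_weight_def sum_distrib_left
  by (rule sum_mono) (rule out_weight_le_ratio_max, simp)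

lemma total_weight_increment_le:
  "k \<le> k' \<Longrightarrow> total_weight k' - total_weight k \<le> spread (w k) * (\<Sum>i\<in>UNIV. v i)"
  unfolding total_weight_def sum_distrib_left sum_subtractf[symmetric]
  by (rule sum_mono) (rule out_weight_increment_le)

lemma total_weight_firing:
  assumes "\<not> quiescent E (w k) (step_size k)"
  shows "total_weight k + step_size k \<le> total_weight (Suc k)"
proof -
  obtain i where "deg i * step_size k \<le> node_balance E (w k) i"
    using assms by (auto simp: quiescent_def not_less)
  then have "step_size k = w (Suc k) i - w k i"
    by (simp add: out_weight_Suc)
  also have "\<dots> \<le> (\<Sum>j\<in>UNIV. w (Suc k) j - w k j)"
    by (rule member_le_sum) (auto simp: out_weight_le_Suc)
  finally show ?thesis
    by (simp add: total_weight_def sum_subtractf)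
qed

lemma quiescent_persists:
  assumes "quiescent E (w k) g" and "\<And>n. k \<le> n \<Longrightarrow> n < k' \<Longrightarrow> step_size n = g" and "k \<le> k'"
  shows "w k' = w k"
  using assms(3,2)
proof (induction k' rule: dec_induct)
  case (step n)
  then have "w n = w k" and "step_size n = g"
    by simp_all
  then show ?case
    using assms(1) out_weight_Suc_quiescent[of E n] by simp
qed simp

definition ends_quiescent :: "nat \<Rightarrow> bool" where
  "ends_quiescent n \<longleftrightarrow> quiescent E (w (phase_start (Suc n))) (1 / 2 ^ n)"

lemma ends_quiescent_or_total_weight_grows:
  "ends_quiescent n \<or> total_weight (phase_start n) + 1 \<le> total_weight (phase_start (Suc n))"
proof (cases "\<exists>k. phase_start n \<le> k \<and> k < phase_start (Suc n) \<and> quiescent E (w k) (1 / 2 ^ n)")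
  case True
  then obtain k where k: "phase_start n \<le> k" "k < phase_start (Suc n)" "quiescent E (w k) (1 / 2 ^ n)"
    by blast
  then have "w (phase_start (Suc n)) = w k"
    by (intro quiescent_persists[of k]) (auto intro: step_size_phase)
  then show ?thesis
    using k by (simp add: ends_quiescent_def)
next
  case False
  have "total_weight (phase_start n) + real t / 2 ^ n \<le> total_weight (phase_start n + t)"
    if "t \<le> 2 ^ n" for t
    using that
  proof (induction t)
    case (Suc t)
    define k where "k = phase_start n + t"
    have k: "phase_start n \<le> k" "k < phase_start (Suc n)"
      using Suc.prems by (auto simp: k_def phase_start_Suc)
    then have step: "step_size k = 1 / 2 ^ n"
      by (rule step_size_phase)
    then have "\<not> quiescent E (w k) (step_size k)"
      using False k by auto
    then have "total_weight k + step_size k \<le> total_weight (Suc k)"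
      by (rule total_weight_firing)
    then show ?case
      using Suc step by (simp add: k_def add_divide_distrib)
  qed simp
  from this[of "2 ^ n"] show ?thesis
    by (simp add: phase_start_Suc)
qed

lemma ends_quiescent_frequently: "\<exists>n\<ge>n0. ends_quiescent n"
proof (rule ccontr)
  assume "\<not> ?thesis"
  then have grows: "real t \<le> total_weight (phase_start (n0 + t))" for t
  proof (induction t)
    case 0
    then show ?case
      using total_weight_nonneg by simp
  next
    case (Suc t)
    then show ?case
      using ends_quiescent_or_total_weight_grows[of "n0 + t"] by fastforce
  qed
  obtain t where "ratio_max (w 0) * (\<Sum>i\<in>UNIV. v i) < real t"
    using reals_Archimedean2 by blast
  then show False
    using grows[of t] total_weight_bounded[of "phase_start (n0 + t)"] by linarith
qed

lemma ends_quiescent_Suc: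
  assumes quiet: "ends_quiescent n" and large: "spread_factor * (\<Sum>i\<in>UNIV. v i) < 2 ^ n"
  shows "ends_quiescent (Suc n)"
proof (rule ccontr)
  let ?k = "phase_start (Suc n)" and ?k' = "phase_start (Suc (Suc n))" and ?V = "\<Sum>i\<in>UNIV. v i"
  assume "\<not> ends_quiescent (Suc n)"
  then have grows: "total_weight ?k + 1 \<le> total_weight ?k'"
    using ends_quiescent_or_total_weight_grows[of "Suc n"] by simp
  have "spread (w ?k) \<le> spread_factor * (1 / 2 ^ n)"
    using quiet by (intro quiescent_spread) (simp_all add: ends_quiescent_def)
  have "total_weight ?k' - total_weight ?k \<le> spread (w ?k) * ?V"
    by (rule total_weight_increment_le) (simp add: phase_start_mono)
  also have "\<dots> \<le> spread_factor * (1 / 2 ^ n) * ?V"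
    using \<open>spread (w ?k) \<le> _\<close> v_pos by (intro mult_right_mono sum_nonneg) (auto intro: less_imp_le)
  also have "\<dots> < 1"
    using large by simp
  finally show False
    using grows by linarith
qed

lemma eventually_ends_quiescent: "\<exists>n0. \<forall>n\<ge>n0. ends_quiescent n"
proof -
  obtain n1 where n1: "spread_factor * (\<Sum>i\<in>UNIV. v i) < 2 ^ n1"
    using real_arch_pow[of 2] by auto
  obtain n0 where "n0 \<ge> n1" "ends_quiescent n0"
    using ends_quiescent_frequently by blast
  have "ends_quiescent n" if "n0 \<le> n" for n
    using that
  proof (induction n rule: dec_induct)
    case (step n)
    have "(2::real) ^ n1 \<le> 2 ^ n"
      using \<open>n0 \<ge> n1\<close> step by (intro power_increasing) auto
    then show ?case
      using n1 by (intro ends_quiescent_Suc[OF step.IH]) linarith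
  qed (rule \<open>ends_quiescent n0\<close>)
  then show ?thesis
    by blast
qed

lemma spread_rate:
  obtains c where "\<forall>\<^sub>F k in sequentially. spread (w k) \<le> c / real k"
proof -
  obtain n0 where n0: "\<And>n. n0 \<le> n \<Longrightarrow> ends_quiescent n"
    using eventually_ends_quiescent by blast
  have "spread (w k) \<le> 4 * spread_factor / real k" if "phase_start (Suc n0) \<le> k" for k
  proof -
    obtain m where m: "phase_start m \<le> k" "k < phase_start (Suc m)"
      by (rule phase_containing)
    have "\<not> m \<le> n0"
      using m that phase_start_mono[of "Suc m" "Suc n0"] by auto
    then obtain n where n: "m = Suc n" "n0 \<le> n"
      by (cases m) auto
    have "2 ^ Suc n \<le> k + 1" "k + 1 < 2 ^ Suc (Suc n)"
      using in_phase_iff[of m k] m unfolding n(1) by blast+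
    moreover have "1 \<le> (2::nat) ^ n"
      by simp
    ultimately have "0 < k" "k < 4 * 2 ^ n"
      unfolding power_Suc by linarith+
    then have "0 < real k" "real k < real (4 * 2 ^ n)"
      by (simp_all only: of_nat_0_less_iff of_nat_less_iff)
    then have k: "0 < real k" "real k < 4 * 2 ^ n"
      by simp_all
    have "spread (w k) \<le> spread (w (phase_start (Suc n)))"
      using m n by (intro spread_antimono) simp
    also have "\<dots> \<le> spread_factor * (1 / 2 ^ n)"
      using n0[OF \<open>n0 \<le> n\<close>] by (intro quiescent_spread) (simp_all add: ends_quiescent_def)
    also have "\<dots> \<le> spread_factor * (4 / real k)"
      using k one_le_edge_gain by (intro mult_left_mono) (simp_all add: spread_factor_def field_simps)
    finally show ?thesis
      by (simp add: mult.commute)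
  qed
  then show ?thesis
    by (intro that[of "4 * spread_factor"]) (auto simp: eventually_sequentially)
qed

lemma imbalance_norm1_bigo: "imbalance_norm1 E \<in> O(\<lambda>k. 1 / real k)"
proof -
  obtain c where c: "\<forall>\<^sub>F k in sequentially. spread (w k) \<le> c / real k"
    by (rule spread_rate)
  define W where "W = (\<Sum>i\<in>UNIV. deg i * v i)"
  have "0 \<le> W"
    unfolding W_def by (intro sum_nonneg mult_nonneg_nonneg) (simp_all add: v_pos less_imp_le)
  have imbalance_le: "imbalance_norm1 E k \<le> W * spread (w k)" for k
  proof -
    have "imbalance_norm1 E k = (\<Sum>i\<in>UNIV. \<bar>node_balance E (w k) i\<bar>)"
      by (simp add: imbalance_norm1_def balance_alg)
    also have "\<dots> \<le> (\<Sum>i\<in>UNIV. deg i * v i * spread (w k))"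
      by (rule sum_mono) (rule abs_node_balance_le)
    also have "\<dots> = W * spread (w k)"
      by (simp add: W_def sum_distrib_right)
    finally show ?thesis .
  qed
  have "\<forall>\<^sub>F k in sequentially. norm (imbalance_norm1 E k) \<le> W * c * norm (1 / real k)"
    using c
  proof eventually_elim
    case (elim k)
    have "0 \<le> imbalance_norm1 E k"
      by (simp add: imbalance_norm1_def sum_nonneg)
    moreover have "W * spread (w k) \<le> W * (c / real k)"
      using elim \<open>0 \<le> W\<close> by (rule mult_left_mono)
    ultimately show ?case
      using imbalance_le[of k] by simp
  qed
  then show ?thesis
    by (rule bigoI)
qed

lemma out_weight_limit:
  obtains L where "\<And>j. (\<lambda>k. w k j) \<longlonglongrightarrow> L j" and "\<And>i. node_balance E L i = 0"
proof -
  define L where "L j = (SUP k. w k j)" for j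
  have conv: "(\<lambda>k. w k j) \<longlonglongrightarrow> L j" for j
    unfolding L_def
  proof (rule LIMSEQ_incseq_SUP)
    show "bdd_above (range (\<lambda>k. w k j))"
      by (rule bdd_aboveI2) (rule out_weight_le_ratio_max[of 0], simp)
    show "incseq (\<lambda>k. w k j)"
      by (rule incseq_SucI) (rule out_weight_le_Suc)
  qed
  obtain c where c: "\<forall>\<^sub>F k in sequentially. spread (w k) \<le> c / real k"
    by (rule spread_rate)
  have balanced: "node_balance E L i = 0" for i
  proof (rule LIMSEQ_unique)
    show "(\<lambda>k. node_balance E (w k) i) \<longlonglongrightarrow> node_balance E L i"
      unfolding node_balance_def by (intro tendsto_intros conv)
    show "(\<lambda>k. node_balance E (w k) i) \<longlonglongrightarrow> 0"
    proof (rule Lim_null_comparison)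
      show "\<forall>\<^sub>F k in sequentially. norm (node_balance E (w k) i) \<le> deg i * v i * (c / real k)"
        using c
      proof eventually_elim
        case (elim k)
        have "deg i * v i * spread (w k) \<le> deg i * v i * (c / real k)"
          using elim v_pos[of i] by (intro mult_left_mono) auto
        then show ?case
          using abs_node_balance_le[of "w k" i] by simp
      qed
      show "(\<lambda>k. deg i * v i * (c / real k)) \<longlonglongrightarrow> 0"
        by (intro tendsto_mult_right_zero lim_const_over_n)
    qed
  qed
  show ?thesis
    by (rule that[OF conv balanced])
qed

lemma alg_converges_weight_balanced:
  "\<exists>Ainf. (\<forall>i j. (\<lambda>k. alg E k i j) \<longlonglongrightarrow> Ainf i j) \<and> weight_balanced E Ainf"
proof -
  obtain L where conv: "\<And>j. (\<lambda>k. w k j) \<longlonglongrightarrow> L j" and balanced: "\<And>i. node_balance E L i = 0"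
    using out_weight_limit by blast
  define Ainf where "Ainf i j = (if j \<in> in_nbrs E i then L j else 0)" for i j
  have "(\<lambda>k. alg E k i j) \<longlonglongrightarrow> Ainf i j" for i j
    by (simp add: alg_eq_out_weight Ainf_def conv)
  moreover have "weight_balanced E Ainf"
    unfolding weight_balanced_iff_balance
    using balance_eq_node_balance[of Ainf E L] balanced by (simp add: Ainf_def)
  ultimately show ?thesis
    by blast
qed

end

theorem theorem1:
  fixes E :: "('v::finite \<times> 'v) set"
  assumes "no_self_loops E"
    and "strongly_connected E"
  shows "(\<exists>Ainf :: 'v \<Rightarrow> 'v \<Rightarrow> real.
            (\<forall>i j. (\<lambda>k. alg E k i j) \<longlonglongrightarrow> Ainf i j) \<and> weight_balanced E Ainf)
       \<and> imbalance_norm1 E \<in> O(\<lambda>k. 1 / real k)"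
proof (cases "E = {}")
  case True
  then have "alg E k i j = 0" and "imbalance_norm1 E k = 0" for k i j
    by (simp_all add: alg_eq_out_weight imbalance_norm1_def balance_def in_nbrs_def out_nbrs_def)
  moreover have "weight_balanced E (\<lambda>i j. 0)"
    using True by (simp add: weight_balanced_def in_nbrs_def out_nbrs_def)
  ultimately show ?thesis
    by (auto intro: bigoI[of _ 0])
next
  case False
  then obtain a b where "(a, b) \<in> E"
    by auto
  with \<open>no_self_loops E\<close> have "a \<noteq> b"
    by (auto simp: no_self_loops_def)
  then have "0 < out_deg E i" for i
    using strongly_connected_out_deg_pos[OF \<open>strongly_connected E\<close>] by metis
  then obtain v where "\<And>i. 0 < v i" "\<And>i. node_balance E v i = 0"
    using balancing_node_weights_exist[OF \<open>strongly_connected E\<close>] by blast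
  then interpret balancing_dynamics E v
    using \<open>strongly_connected E\<close> \<open>\<And>i. 0 < out_deg E i\<close> by unfold_locales
  show ?thesis
    using alg_converges_weight_balanced imbalance_norm1_bigo by blast
qed

end
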